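(* Let $n\ge 2$ and let $\overrightarrow{K_{1,n}}$ be an orientation of the star $K_{1,n}$. Then $\overrightarrow{K_{1,n}}$ is $\{0,2\}$-antimagic if and only if its center is neither a source nor a sink.
   Context: An oriented graph $\overrightarrow{G}$ is a directed graph obtained from a simple undirected graph by giving each edge one direction. For vertices $u,v$, $d(u,v)$ is the length of a shortest directed path from $u$ to $v$ ($d(u,u)=0$, and $d(u,v)=\infty$ if there is no such path). Let $\partial=\max\{d(u,v)<\infty : u,v\in V(\overrightarrow{G})\}$. A distance set is a nonempty $D\subseteq\{0,1,\dots,\partial\}$. The $D$-neighborhood of $u$ is $N_D(u)=\{v : d(u,v)\in D\}$. For a bijection $f:V(\overrightarrow{G})\to\{1,\dots,|V(\overrightarrow{G})|\}$, the $D$-weight of $u$ is $\omega_D(u)=\sum_{v\in N_D(u)} f(v)$. $\overrightarrow{G}$ is $D$-antimagic if $D\subseteq\{0,\dots,\partial\}$ (in particular, $\{0,2\}$-antimagic requires $\partial\ge 2$) and there is such a bijection $f$ with all $D$-weights pairwise distinct. The center of $\overrightarrow{K_{1,n}}$ is its vertex of degree $n$; a source is a vertex of in-degree $0$ and a sink a vertex of out-degree $0$. *)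

theory Defs
  imports Main "HOL-Library.Extended_Nat"
begin

definition oriented_graph :: "'a set \<Rightarrow> ('a \<times> 'a) set \<Rightarrow> bool" where
  "oriented_graph V A \<longleftrightarrow> finite V \<and> A \<subseteq> V \<times> V \<and>
     (\<forall>u v. (u, v) \<in> A \<longrightarrow> u \<noteq> v \<and> (v, u) \<notin> A)"

definition odist :: "('a \<times> 'a) set \<Rightarrow> 'a \<Rightarrow> 'a \<Rightarrow> enat" where
  "odist A u v = (if (u, v) \<in> A\<^sup>* then enat (LEAST k. (u, v) \<in> A ^^ k) else \<infinity>)"

definition odiam :: "'a set \<Rightarrow> ('a \<times> 'a) set \<Rightarrow> nat" where
  "odiam V A = Max {k. \<exists>u\<in>V. \<exists>v\<in>V. odist A u v = enat k}"

definition D_nbhd :: "'a set \<Rightarrow> ('a \<times> 'a) set \<Rightarrow> nat set \<Rightarrow> 'a \<Rightarrow> 'a set" where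
  "D_nbhd V A D u = {v \<in> V. \<exists>k\<in>D. odist A u v = enat k}"

definition D_weight :: "'a set \<Rightarrow> ('a \<times> 'a) set \<Rightarrow> nat set \<Rightarrow> ('a \<Rightarrow> nat) \<Rightarrow> 'a \<Rightarrow> nat" where
  "D_weight V A D f u = (\<Sum>v\<in>D_nbhd V A D u. f v)"

definition D_antimagic :: "'a set \<Rightarrow> ('a \<times> 'a) set \<Rightarrow> nat set \<Rightarrow> bool" where
  "D_antimagic V A D \<longleftrightarrow> D \<noteq> {} \<and> D \<subseteq> {0..odiam V A} \<and>
     (\<exists>f. bij_betw f V {1..card V} \<and> inj_on (D_weight V A D f) V)"

definition oriented_star :: "'a set \<Rightarrow> ('a \<times> 'a) set \<Rightarrow> 'a \<Rightarrow> nat \<Rightarrow> bool" where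
  "oriented_star V A c n \<longleftrightarrow> oriented_graph V A \<and> c \<in> V \<and> card (V - {c}) = n \<and>
     {{u, v} | u v. (u, v) \<in> A} = {{c, l} | l. l \<in> V - {c}}"

definition is_source :: "('a \<times> 'a) set \<Rightarrow> 'a \<Rightarrow> bool" where
  "is_source A x \<longleftrightarrow> (\<forall>u. (u, x) \<notin> A)"

definition is_sink :: "('a \<times> 'a) set \<Rightarrow> 'a \<Rightarrow> bool" where
  "is_sink A x \<longleftrightarrow> (\<forall>u. (x, u) \<notin> A)"

end

theory Submission
  imports Defs
begin

text \<open>
  In an oriented star every arc is incident with the center c, so every directed path has
  length at most 2, and d(u,v) = 2 exactly when u \<rightarrow> c \<rightarrow> v. Hence the largest finite
  distance is at least 2 iff c has both an in- and an out-neighbour, which is necessary for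
  {0,2}-antimagicness. Conversely the {0,2}-neighbourhood of u is {u} together with the
  out-neighbourhood of c if u \<rightarrow> c, and just {u} otherwise. Giving c the label 1, the weight of
  an in-neighbour of c exceeds the label sum T of the out-neighbours, while every other weight
  is a single label at most T; so any bijective labelling with f c = 1 is antimagic.
\<close>

lemma odist_eq_enat_iff:
  "odist A u v = enat k \<longleftrightarrow> (u, v) \<in> A ^^ k \<and> (\<forall>j<k. (u, v) \<notin> A ^^ j)"
proof
  assume dist: "odist A u v = enat k"
  then have reach: "(u, v) \<in> A\<^sup>*" unfolding odist_def by (auto split: if_splits)
  then have k: "k = (LEAST k. (u, v) \<in> A ^^ k)" using dist unfolding odist_def by auto
  from reach obtain m where "(u, v) \<in> A ^^ m" using rtrancl_power by blast
  then have "(u, v) \<in> A ^^ k" unfolding k by (rule LeastI)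
  moreover have "\<forall>j<k. (u, v) \<notin> A ^^ j" unfolding k using not_less_Least by blast
  ultimately show "(u, v) \<in> A ^^ k \<and> (\<forall>j<k. (u, v) \<notin> A ^^ j)" by blast
next
  assume shortest: "(u, v) \<in> A ^^ k \<and> (\<forall>j<k. (u, v) \<notin> A ^^ j)"
  then have reach: "(u, v) \<in> A\<^sup>*" using rtrancl_power by blast
  have "(LEAST k. (u, v) \<in> A ^^ k) = k"
    by (rule Least_equality) (use shortest in \<open>auto simp: not_less[symmetric]\<close>)
  then show "odist A u v = enat k" using reach unfolding odist_def by simp
qed

lemma odist_eq_0_iff: "odist A u v = enat 0 \<longleftrightarrow> u = v"
  unfolding odist_eq_enat_iff by simp

lemma inj_on_add_on_subset:
  fixes f :: "'a \<Rightarrow> nat"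
  assumes "inj_on f V" and "\<And>a. a \<in> I \<Longrightarrow> 0 < f a" and "\<And>b. b \<in> V - I \<Longrightarrow> f b \<le> T"
  shows "inj_on (\<lambda>u. f u + (if u \<in> I then T else 0)) V"
proof (rule inj_onI)
  fix u w assume "u \<in> V" "w \<in> V"
    and eq: "f u + (if u \<in> I then T else 0) = f w + (if w \<in> I then T else 0)"
  have "f a + T \<noteq> f b" if "a \<in> I" "b \<in> V - I" for a b
    using assms(2)[OF that(1)] assms(3)[OF that(2)] by linarith
  then have "u \<in> I \<longleftrightarrow> w \<in> I"
    using eq \<open>u \<in> V\<close> \<open>w \<in> V\<close> by (metis Diff_iff add.right_neutral)
  then have "f u = f w" using eq by (simp split: if_splits)
  then show "u = w" using assms(1) \<open>u \<in> V\<close> \<open>w \<in> V\<close> by (simp add: inj_on_eq_iff)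
qed

lemma bij_betw_labelling_with_1:
  assumes "finite V" and "c \<in> V"
  obtains f where "bij_betw f V {1..card V}" and "f c = 1"
proof -
  have "card (V - {c}) = card {2..card V}"
    using assms by (simp add: card_Diff_singleton)
  then obtain g where g: "bij_betw g (V - {c}) {2..card V}"
    using finite_same_card_bij assms(1) by blast
  define f where "f = g(c := 1)"
  have "bij_betw f (V - {c}) {2..card V}"
    using g bij_betw_cong[of "V - {c}" f g] unfolding f_def by auto
  moreover have "bij_betw f {c} {1}" unfolding f_def by simp
  ultimately have "bij_betw f ((V - {c}) \<union> {c}) ({2..card V} \<union> {1})"
    by (rule bij_betw_combine) auto
  moreover have "(V - {c}) \<union> {c} = V" using assms(2) by auto
  moreover have "{2..card V} \<union> {1} = {1..card V}"
    using assms by (auto simp: card_gt_0_iff Suc_le_eq)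
  ultimately have "bij_betw f V {1..card V}" by simp
  then show thesis using that unfolding f_def by simp
qed

locale oriented_star_graph =
  fixes V :: "'a set" and A :: "('a \<times> 'a) set" and c :: 'a and n :: nat
  assumes oriented_star: "oriented_star V A c n"
begin

lemma finite_V: "finite V"
  and center_in_V: "c \<in> V"
  and arcs_subset: "A \<subseteq> V \<times> V"
  and arc_irrefl_asym: "(u, v) \<in> A \<Longrightarrow> u \<noteq> v \<and> (v, u) \<notin> A"
  using oriented_star unfolding oriented_star_def oriented_graph_def by auto

lemma arc_incident_center: "(u, v) \<in> A \<Longrightarrow> u = c \<or> v = c"
proof -
  assume "(u, v) \<in> A"
  then have "{u, v} \<in> {{c, l} | l. l \<in> V - {c}}"
    using oriented_star unfolding oriented_star_def by blast
  then show ?thesis by (auto simp: doubleton_eq_iff)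
qed

lemma arc_from_or_to_center: "l \<in> V \<Longrightarrow> l \<noteq> c \<Longrightarrow> (c, l) \<in> A \<or> (l, c) \<in> A"
proof -
  assume "l \<in> V" "l \<noteq> c"
  then have "{c, l} \<in> {{u, v} | u v. (u, v) \<in> A}"
    using oriented_star unfolding oriented_star_def by blast
  then show ?thesis by (auto simp: doubleton_eq_iff)
qed

lemma relcomp_iff_through_center: "(u, v) \<in> A O A \<longleftrightarrow> (u, c) \<in> A \<and> (c, v) \<in> A"
proof
  assume "(u, v) \<in> A O A"
  then obtain m where m: "(u, m) \<in> A" "(m, v) \<in> A" by blast
  then have "m = c" using arc_incident_center arc_irrefl_asym by blast
  then show "(u, c) \<in> A \<and> (c, v) \<in> A" using m by simp
qed auto

lemma relpow_empty: assumes "3 \<le> k" shows "A ^^ k = {}"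
proof -
  have "(A O A) O A = {}"
    using relcomp_iff_through_center arc_incident_center arc_irrefl_asym by blast
  then have "A ^^ 3 = {}" by (simp add: numeral_3_eq_3 relpow_commute)
  then show ?thesis using assms relpow_add[of "k - 3" 3 A] by simp
qed

lemma odist_le_2: "odist A u v = enat k \<Longrightarrow> k \<le> 2"
  using relpow_empty unfolding odist_eq_enat_iff
  by (metis empty_iff not_less_eq_eq numeral_2_eq_2 numeral_3_eq_3)

lemma odist_eq_2_iff: "odist A u v = enat 2 \<longleftrightarrow> (u, c) \<in> A \<and> (c, v) \<in> A"
proof -
  have "(u, v) \<in> A ^^ 2 \<longleftrightarrow> (u, c) \<in> A \<and> (c, v) \<in> A"
    using relcomp_iff_through_center by (simp add: numeral_2_eq_2)
  moreover have "\<forall>j<2. (u, v) \<notin> A ^^ j" if "(u, c) \<in> A" "(c, v) \<in> A"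
  proof -
    have "u \<noteq> v" "(u, v) \<notin> A" using that arc_incident_center arc_irrefl_asym by blast+
    then show ?thesis by (auto simp: less_2_cases_iff)
  qed
  ultimately show ?thesis unfolding odist_eq_enat_iff by blast
qed

lemma odiam_ge_2_iff: "2 \<le> odiam V A \<longleftrightarrow> \<not> is_source A c \<and> \<not> is_sink A c"
proof -
  define S where "S = {k. \<exists>u\<in>V. \<exists>v\<in>V. odist A u v = enat k}"
  have "S \<subseteq> {0..2}" unfolding S_def using odist_le_2 by fastforce
  then have "finite S" by (rule finite_subset) simp
  moreover have "0 \<in> S" unfolding S_def using center_in_V odist_eq_0_iff[of A c c] by blast
  ultimately have "Max S \<in> S" by (intro Max_in) auto
  have "odiam V A = Max S" by (simp add: odiam_def S_def)
  also have "2 \<le> Max S \<longleftrightarrow> 2 \<in> S"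
    using \<open>Max S \<in> S\<close> \<open>S \<subseteq> {0..2}\<close> \<open>finite S\<close>
    by (metis Max_ge atLeastAtMost_iff le_antisym subsetD)
  also have "2 \<in> S \<longleftrightarrow> (\<exists>u v. (u, c) \<in> A \<and> (c, v) \<in> A)"
    unfolding S_def mem_Collect_eq odist_eq_2_iff using arcs_subset by auto
  finally show ?thesis unfolding is_source_def is_sink_def by blast
qed

lemma D_nbhd_0_2:
  assumes "u \<in> V"
  shows "D_nbhd V A {0, 2} u = insert u (if (u, c) \<in> A then {v. (c, v) \<in> A} else {})"
proof -
  have "D_nbhd V A {0, 2} u = {v \<in> V. u = v \<or> (u, c) \<in> A \<and> (c, v) \<in> A}"
    unfolding D_nbhd_def by (simp add: odist_eq_0_iff odist_eq_2_iff)
  then show ?thesis using assms arcs_subset by auto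
qed

lemma D_weight_0_2:
  assumes "u \<in> V"
  shows "D_weight V A {0, 2} f u = f u + (if (u, c) \<in> A then sum f {v. (c, v) \<in> A} else 0)"
proof -
  have "finite {v. (c, v) \<in> A}" using finite_V arcs_subset by (auto intro: finite_subset)
  moreover have "(u, c) \<in> A \<Longrightarrow> (c, u) \<notin> A" using arc_irrefl_asym by blast
  ultimately show ?thesis unfolding D_weight_def D_nbhd_0_2[OF assms] by auto
qed

lemma inj_on_D_weight_0_2:
  assumes f: "bij_betw f V {1..card V}" and "f c = 1" and out: "(c, y) \<in> A"
  shows "inj_on (D_weight V A {0, 2} f) V"
proof -
  define Out where "Out = {v. (c, v) \<in> A}"
  have "finite Out" unfolding Out_def using finite_V arcs_subset by (auto intro: finite_subset)
  have pos: "v \<in> V \<Longrightarrow> 1 \<le> f v" for v using f unfolding bij_betw_def by auto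
  have le_T: "f b \<le> sum f Out" if "b \<in> V - {a. (a, c) \<in> A}" for b
  proof (cases "b = c")
    case True
    have "f y \<le> sum f Out"
      using \<open>finite Out\<close> out unfolding Out_def by (simp add: member_le_sum)
    then show ?thesis using True \<open>f c = 1\<close> pos[of y] out arcs_subset by auto
  next
    case False
    then have "b \<in> Out" unfolding Out_def using that arc_from_or_to_center by blast
    then show ?thesis using \<open>finite Out\<close> by (simp add: member_le_sum)
  qed
  have "inj_on (\<lambda>u. f u + (if u \<in> {a. (a, c) \<in> A} then sum f Out else 0)) V"
    by (rule inj_on_add_on_subset)
      (use f pos le_T arcs_subset in \<open>auto simp: bij_betw_def Suc_le_eq\<close>)
  then show ?thesis
    by (rule inj_on_cong[THEN iffD1, rotated]) (simp add: D_weight_0_2 Out_def)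
qed

end

theorem mainTheorem4:
  fixes V :: "'a set" and A :: "('a \<times> 'a) set" and c :: 'a and n :: nat
  assumes "n \<ge> 2" and "oriented_star V A c n"
  shows "D_antimagic V A {0, 2} \<longleftrightarrow> \<not> is_source A c \<and> \<not> is_sink A c"
proof -
  interpret oriented_star_graph V A c n by (rule oriented_star_graph.intro) fact
  show ?thesis
  proof
    assume "D_antimagic V A {0, 2}"
    then have "{0, 2} \<subseteq> {0..odiam V A}" unfolding D_antimagic_def by (elim conjE)
    then show "\<not> is_source A c \<and> \<not> is_sink A c" using odiam_ge_2_iff by simp
  next
    assume center: "\<not> is_source A c \<and> \<not> is_sink A c"
    then have "{0, 2} \<subseteq> {0..odiam V A}" using odiam_ge_2_iff by simp
    obtain y where "(c, y) \<in> A" using center unfolding is_sink_def by blast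
    obtain f where "bij_betw f V {1..card V}" and "f c = 1"
      by (rule bij_betw_labelling_with_1[OF finite_V center_in_V])
    then have "inj_on (D_weight V A {0, 2} f) V" using \<open>(c, y) \<in> A\<close> by (rule inj_on_D_weight_0_2)
    show "D_antimagic V A {0, 2}"
      unfolding D_antimagic_def using \<open>{0, 2} \<subseteq> _\<close> \<open>bij_betw f V _\<close> \<open>inj_on _ V\<close> by blast
  qed
qed

end
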